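(* Let $\Gamma_{\mathrm{comp}}$ be the set of all sufficiently pure branches $A$ such that every finite subset of $A$ is satisfiable. Then $\Gamma_{\mathrm{comp}}$ is a complete abstract consistency class.
   Context: Types: a countable set of base types including a distinguished $o$; other base types are sorts ($\alpha$). Types: base types and $\sigma\tau$ (functions from $\sigma$ to $\tau$; $\sigma\tau\mu=\sigma(\tau\mu)$). Countably many names, each with a unique type, infinitely many of each type. Terms: names; $st:\mu$ for $s:\tau\mu,t:\tau$; $\lambda x.t:\sigma\tau$ for a name $x:\sigma$, $t:\tau$. Logical constants: $\neg:oo$, $=_\sigma:\sigma\sigma o$; other names are variables. Formulas: terms of type $o$; $s=_\sigma t$ is $(=_\sigma s)t$; $s\neq_\sigma t$ is $\neg(s=_\sigma t)$. Semantics: a frame $\mathcal{D}$ maps types to nonempty sets with $\mathcal{D}(\sigma\tau)\subseteq(\mathcal{D}\sigma\to\mathcal{D}\tau)$. An assignment $\mathcal{I}$ into $\mathcal{D}$ extends $\mathcal{D}$ and maps names $x:\sigma$ into $\mathcal{D}\sigma$; $\mathcal{I}^x_a$ is the update. Partial evaluation: $\hat{\mathcal{I}}x=\mathcal{I}x$; $\hat{\mathcal{I}}(st)=(\hat{\mathcal{I}}s)(\hat{\mathcal{I}}t)$ when defined; $\hat{\mathcal{I}}(\lambda x.s)=f$ if $\lambda x.s:\sigma\tau$, $f\in\mathcal{D}(\sigma\tau)$ and $\widehat{\mathcal{I}^x_a}s=fa$ for all $a\in\mathcal{D}\sigma$. Interpretation: assignment with total evaluation. Logical: $\mathcal{I}o=\{0,1\}$,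 $\mathcal{I}(\neg)$ negation, $\mathcal{I}(=_\sigma)$ identity. A set of formulas is satisfiable if some logical interpretation evaluates all of them to $1$. Normalization: fixed type-preserving total $[\cdot]$; $s$ normal iff $[s]=s$; $[[s]]=[s]$; $[[s]t]=[st]$; $[xs_1\dots s_n]=x[s_1]\dots[s_n]$ for a name $x$, $n\ge0$, $xs_1\dots s_n$ of base type; $\hat{\mathcal{I}}[s]=\hat{\mathcal{I}}s$ for every interpretation $\mathcal{I}$. A branch is a set of normal formulas. A branch $A$ is sufficiently pure if for every type $\sigma$ there are infinitely many variables of type $\sigma$ not occurring free in the formulas of $A$. An abstract consistency class is a set $\Gamma$ of branches such that every $A\in\Gamma$ satisfies ($x$ ranges over variables): (DN) if $\neg\neg s\in A$ then $A\cup\{s\}\in\Gamma$; (BQ) if $s=_ot\in A$ then $A\cup\{s,t\}\in\Gamma$ or $A\cup\{\neg s,\neg t\}\in\Gamma$; (BE) if $s\neq_ot\in A$ then $A\cup\{s,\neg t\}\in\Gamma$ or $A\cup\{\neg s,t\}\in\Gamma$; (FQ) if $s=_{\sigma\tau}t\in A$ then $A\cup\{[su]=[tu]\}\in\Gamma$ for every normal $u:\sigma$; (FE) if $s\neq_{\sigma\tau}t\in A$ then $A\cup\{[sx]\neq[tx]\}\in\Gamma$ for some variable $x$; (Mat) if $xs_1\dots s_n,\neg xt_1\dots t_n\in A$ then $n\ge1$ and $A\cup\{s_i\neq t_i\}\in\Gamma$ for some $i$; (Dec) if $xs_1\dots s_n\neq_\alpha xt_1\dots t_n\in A$ then $n\ge1$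 and $A\cup\{s_i\neq t_i\}\in\Gamma$ for some $i$; (Con) if $s=_\alpha t,u\neq_\alpha v\in A$ then $A\cup\{s\neq u,t\neq u\}\in\Gamma$ or $A\cup\{s\neq v,t\neq v\}\in\Gamma$. $\Gamma$ is complete if for all $A\in\Gamma$ and normal formulas $s$, $A\cup\{s\}\in\Gamma$ or $A\cup\{\neg s\}\in\Gamma$. *)

theory Defs
  imports Main
begin

text \<open>Base types are indexed by natural numbers; Base 0 is the distinguished type o,
  all other base types are sorts.\<close>
datatype ty = Base nat | Fun ty ty

abbreviation tyo :: ty where "tyo \<equiv> Base 0"

definition is_sort :: "ty \<Rightarrow> bool" where
  "is_sort \<sigma> \<longleftrightarrow> (\<exists>n. \<sigma> = Base (Suc n))"

datatype name = Var nat ty | Neg | Eq ty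

fun ntype :: "name \<Rightarrow> ty" where
  "ntype (Var n \<sigma>) = \<sigma>"
| "ntype Neg = Fun tyo tyo"
| "ntype (Eq \<sigma>) = Fun \<sigma> (Fun \<sigma> tyo)"

definition is_var :: "name \<Rightarrow> bool" where
  "is_var x \<longleftrightarrow> (\<exists>n \<sigma>. x = Var n \<sigma>)"

text \<open>Raw terms; the terms of the paper are the well-typed raw terms.\<close>
datatype tm = Nm name | App tm tm | Lam name tm

fun typeof :: "tm \<Rightarrow> ty option" where
  "typeof (Nm x) = Some (ntype x)"
| "typeof (App s t) =
     (case typeof s of
        Some (Fun \<sigma> \<tau>) \<Rightarrow> (if typeof t = Some \<sigma> then Some \<tau> else None)
      | _ \<Rightarrow> None)"
| "typeof (Lam x t) = map_option (Fun (ntype x)) (typeof t)"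

definition wt :: "tm \<Rightarrow> bool" where
  "wt t \<longleftrightarrow> typeof t \<noteq> None"

definition tyof :: "tm \<Rightarrow> ty" where
  "tyof t = the (typeof t)"

definition is_formula :: "tm \<Rightarrow> bool" where
  "is_formula t \<longleftrightarrow> typeof t = Some tyo"

primrec frees :: "tm \<Rightarrow> name set" where
  "frees (Nm x) = {x}"
| "frees (App s t) = frees s \<union> frees t"
| "frees (Lam x t) = frees t - {x}"

definition neg :: "tm \<Rightarrow> tm" where
  "neg s = App (Nm Neg) s"

definition eq :: "ty \<Rightarrow> tm \<Rightarrow> tm \<Rightarrow> tm" where
  "eq \<sigma> s t = App (App (Nm (Eq \<sigma>)) s) t"

definition neq :: "ty \<Rightarrow> tm \<Rightarrow> tm \<Rightarrow> tm" where
  "neq \<sigma> s t = neg (eq \<sigma> s t)"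

definition apps :: "tm \<Rightarrow> tm list \<Rightarrow> tm" where
  "apps h ss = foldl App h ss"

text \<open>Semantic values: truth values are B False (=0) and B True (=1); other values
  are drawn from an arbitrary universe type 'u.\<close>
datatype 'u dval = B bool | U 'u

text \<open>A frame is given by D (a nonempty set for every type) together with an
  application operation ap; the conditions say that every element of D(sigma tau)
  acts (via ap) as a function from D sigma to D tau, and distinct elements act as
  distinct functions, i.e. D(sigma tau) is (identified with) a subset of
  D sigma -> D tau.\<close>
definition frame :: "(ty \<Rightarrow> 'v set) \<Rightarrow> ('v \<Rightarrow> 'v \<Rightarrow> 'v) \<Rightarrow> bool" where
  "frame D ap \<longleftrightarrow>
     (\<forall>\<sigma>. D \<sigma> \<noteq> {}) \<and>
     (\<forall>\<sigma> \<tau>. \<forall>f\<in>D (Fun \<sigma> \<tau>). \<forall>a\<in>D \<sigma>. ap f a \<in> D \<tau>) \<and>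
     (\<forall>\<sigma> \<tau>. \<forall>f\<in>D (Fun \<sigma> \<tau>). \<forall>g\<in>D (Fun \<sigma> \<tau>).
        (\<forall>a\<in>D \<sigma>. ap f a = ap g a) \<longrightarrow> f = g)"

definition assignment :: "(ty \<Rightarrow> 'v set) \<Rightarrow> ('v \<Rightarrow> 'v \<Rightarrow> 'v) \<Rightarrow> (name \<Rightarrow> 'v) \<Rightarrow> bool" where
  "assignment D ap I \<longleftrightarrow> frame D ap \<and> (\<forall>x. I x \<in> D (ntype x))"

primrec eval :: "(ty \<Rightarrow> 'v set) \<Rightarrow> ('v \<Rightarrow> 'v \<Rightarrow> 'v) \<Rightarrow> (name \<Rightarrow> 'v) \<Rightarrow> tm \<Rightarrow> 'v option" where
  "eval D ap I (Nm x) = Some (I x)"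
| "eval D ap I (App s t) =
     (case eval D ap I s of
        None \<Rightarrow> None
      | Some f \<Rightarrow> (case eval D ap I t of None \<Rightarrow> None | Some a \<Rightarrow> Some (ap f a)))"
| "eval D ap I (Lam x s) =
     (case typeof (Lam x s) of
        None \<Rightarrow> None
      | Some \<rho> \<Rightarrow>
          (if \<exists>f\<in>D \<rho>. \<forall>a\<in>D (ntype x). eval D ap (I(x := a)) s = Some (ap f a)
           then Some (SOME f. f \<in> D \<rho> \<and> (\<forall>a\<in>D (ntype x). eval D ap (I(x := a)) s = Some (ap f a)))
           else None))"

definition is_interp :: "(ty \<Rightarrow> 'v set) \<Rightarrow> ('v \<Rightarrow> 'v \<Rightarrow> 'v) \<Rightarrow> (name \<Rightarrow> 'v) \<Rightarrow> bool" where
  "is_interp D ap I \<longleftrightarrow> assignment D ap I \<and> (\<forall>t. wt t \<longrightarrow> eval D ap I t \<noteq> None)"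

definition logical :: "(ty \<Rightarrow> 'u dval set) \<Rightarrow> ('u dval \<Rightarrow> 'u dval \<Rightarrow> 'u dval) \<Rightarrow> (name \<Rightarrow> 'u dval) \<Rightarrow> bool" where
  "logical D ap I \<longleftrightarrow> is_interp D ap I \<and>
     D tyo = {B False, B True} \<and>
     (\<forall>b. ap (I Neg) (B b) = B (\<not> b)) \<and>
     (\<forall>\<sigma>. \<forall>a\<in>D \<sigma>. \<forall>b\<in>D \<sigma>. ap (ap (I (Eq \<sigma>)) a) b = B (a = b))"

definition satisfiable :: "'u itself \<Rightarrow> tm set \<Rightarrow> bool" where
  "satisfiable _ S \<longleftrightarrow>
     (\<exists>(D :: ty \<Rightarrow> 'u dval set) ap I. logical D ap I \<and> (\<forall>s\<in>S. eval D ap I s = Some (B True)))"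

definition normalizer :: "'u itself \<Rightarrow> (tm \<Rightarrow> tm) \<Rightarrow> bool" where
  "normalizer _ nrm \<longleftrightarrow>
     (\<forall>s \<sigma>. typeof s = Some \<sigma> \<longrightarrow> typeof (nrm s) = Some \<sigma>) \<and>
     (\<forall>s. wt s \<longrightarrow> nrm (nrm s) = nrm s) \<and>
     (\<forall>s t. wt (App s t) \<longrightarrow> nrm (App (nrm s) t) = nrm (App s t)) \<and>
     (\<forall>x ss n. typeof (apps (Nm x) ss) = Some (Base n) \<longrightarrow>
        nrm (apps (Nm x) ss) = apps (Nm x) (map nrm ss)) \<and>
     (\<forall>(D :: ty \<Rightarrow> 'u dval set) ap I. is_interp D ap I \<longrightarrow>
        (\<forall>s. wt s \<longrightarrow> eval D ap I (nrm s) = eval D ap I s))"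

definition normal :: "(tm \<Rightarrow> tm) \<Rightarrow> tm \<Rightarrow> bool" where
  "normal nrm s \<longleftrightarrow> wt s \<and> nrm s = s"

definition branch :: "(tm \<Rightarrow> tm) \<Rightarrow> tm set \<Rightarrow> bool" where
  "branch nrm A \<longleftrightarrow> (\<forall>s\<in>A. is_formula s \<and> nrm s = s)"

definition sufficiently_pure :: "tm set \<Rightarrow> bool" where
  "sufficiently_pure A \<longleftrightarrow>
     (\<forall>\<sigma>. infinite {x. is_var x \<and> ntype x = \<sigma> \<and> (\<forall>s\<in>A. x \<notin> frees s)})"

definition acc :: "(tm \<Rightarrow> tm) \<Rightarrow> tm set set \<Rightarrow> bool" where
  "acc nrm \<Gamma> \<longleftrightarrow> (\<forall>A\<in>\<Gamma>. branch nrm A \<and>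
     \<comment> \<open>DN\<close>
     (\<forall>s. neg (neg s) \<in> A \<longrightarrow> A \<union> {s} \<in> \<Gamma>) \<and>
     \<comment> \<open>BQ\<close>
     (\<forall>s t. eq tyo s t \<in> A \<longrightarrow> A \<union> {s, t} \<in> \<Gamma> \<or> A \<union> {neg s, neg t} \<in> \<Gamma>) \<and>
     \<comment> \<open>BE\<close>
     (\<forall>s t. neq tyo s t \<in> A \<longrightarrow> A \<union> {s, neg t} \<in> \<Gamma> \<or> A \<union> {neg s, t} \<in> \<Gamma>) \<and>
     \<comment> \<open>FQ\<close>
     (\<forall>\<sigma> \<tau> s t. eq (Fun \<sigma> \<tau>) s t \<in> A \<longrightarrow>
        (\<forall>u. normal nrm u \<and> typeof u = Some \<sigma> \<longrightarrow>
           A \<union> {eq \<tau> (nrm (App s u)) (nrm (App t u))} \<in> \<Gamma>)) \<and>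
     \<comment> \<open>FE\<close>
     (\<forall>\<sigma> \<tau> s t. neq (Fun \<sigma> \<tau>) s t \<in> A \<longrightarrow>
        (\<exists>x. is_var x \<and> ntype x = \<sigma> \<and>
           A \<union> {neq \<tau> (nrm (App s (Nm x))) (nrm (App t (Nm x)))} \<in> \<Gamma>)) \<and>
     \<comment> \<open>Mat\<close>
     (\<forall>x ss ts. is_var x \<and> length ss = length ts \<and>
        apps (Nm x) ss \<in> A \<and> neg (apps (Nm x) ts) \<in> A \<longrightarrow>
        length ss \<ge> 1 \<and>
        (\<exists>i<length ss. A \<union> {neq (tyof (ss ! i)) (ss ! i) (ts ! i)} \<in> \<Gamma>)) \<and>
     \<comment> \<open>Dec\<close>
     (\<forall>\<alpha> x ss ts. is_sort \<alpha> \<and> is_var x \<and> length ss = length ts \<and>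
        neq \<alpha> (apps (Nm x) ss) (apps (Nm x) ts) \<in> A \<longrightarrow>
        length ss \<ge> 1 \<and>
        (\<exists>i<length ss. A \<union> {neq (tyof (ss ! i)) (ss ! i) (ts ! i)} \<in> \<Gamma>)) \<and>
     \<comment> \<open>Con\<close>
     (\<forall>\<alpha> s t u v. is_sort \<alpha> \<and> eq \<alpha> s t \<in> A \<and> neq \<alpha> u v \<in> A \<longrightarrow>
        A \<union> {neq \<alpha> s u, neq \<alpha> t u} \<in> \<Gamma> \<or> A \<union> {neq \<alpha> s v, neq \<alpha> t v} \<in> \<Gamma>))"

definition complete_class :: "(tm \<Rightarrow> tm) \<Rightarrow> tm set set \<Rightarrow> bool" where
  "complete_class nrm \<Gamma> \<longleftrightarrow>
     (\<forall>A\<in>\<Gamma>. \<forall>s. is_formula s \<and> nrm s = s \<longrightarrow> A \<union> {s} \<in> \<Gamma> \<or> A \<union> {neg s} \<in> \<Gamma>)"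

definition Gamma_comp :: "'u itself \<Rightarrow> (tm \<Rightarrow> tm) \<Rightarrow> tm set set" where
  "Gamma_comp T nrm =
     {A. branch nrm A \<and> sufficiently_pure A \<and>
         (\<forall>F. F \<subseteq> A \<and> finite F \<longrightarrow> satisfiable T F)}"

end

theory Submission
  imports Defs
begin

text \<open>Each rule of an abstract consistency class adds one of finitely many finite sets \<open>N\<close> of
  normal formulas to \<open>A\<close>, and it is sound: every logical model of the finitely many formulas of
  \<open>A\<close> that trigger it satisfies one of the \<open>N\<close> (for FE after updating a fresh variable, which
  leaves the formulas of \<open>A\<close> true). Finite satisfiability of \<open>A\<close> then transfers to some
  \<open>A \<union> N\<close> by a compactness-style argument, and sufficient purity survives because only finitely
  many variables are added.\<close>

abbreviation models ::
    "(ty \<Rightarrow> 'u dval set) \<Rightarrow> ('u dval \<Rightarrow> 'u dval \<Rightarrow> 'u dval) \<Rightarrow> (name \<Rightarrow> 'u dval) \<Rightarrow> tm set \<Rightarrow> bool"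
  where
  "models D ap I S \<equiv> \<forall>s\<in>S. eval D ap I s = Some (B True)"

lemma typeof_AppD:
  "typeof (App s t) = Some \<tau> \<Longrightarrow> \<exists>\<sigma>. typeof s = Some (Fun \<sigma> \<tau>) \<and> typeof t = Some \<sigma>"
  by (auto split: option.splits ty.splits if_splits)

lemma typeof_neg: "typeof (neg s) = Some \<tau> \<longleftrightarrow> typeof s = Some tyo \<and> \<tau> = tyo"
  by (auto simp: neg_def split: option.splits ty.splits if_splits)

lemma typeof_eq:
  "typeof (eq \<sigma> s t) = Some \<tau> \<longleftrightarrow> typeof s = Some \<sigma> \<and> typeof t = Some \<sigma> \<and> \<tau> = tyo"
  by (auto simp: eq_def split: option.splits ty.splits if_splits)

lemma typeof_neq:
  "typeof (neq \<sigma> s t) = Some \<tau> \<longleftrightarrow> typeof s = Some \<sigma> \<and> typeof t = Some \<sigma> \<and> \<tau> = tyo"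
  by (simp add: neq_def typeof_neg typeof_eq)

lemma typeof_appsD:
  "typeof (apps h ss) = Some \<tau> \<Longrightarrow> \<exists>\<sigma>s. map typeof ss = map Some \<sigma>s \<and> typeof h = Some (foldr Fun \<sigma>s \<tau>)"
proof (induction ss arbitrary: h)
  case Nil
  then show ?case by (simp add: apps_def)
next
  case (Cons s ss)
  have "typeof (apps (App h s) ss) = Some \<tau>" using Cons.prems by (simp add: apps_def)
  then obtain \<sigma>s where \<sigma>s: "map typeof ss = map Some \<sigma>s" "typeof (App h s) = Some (foldr Fun \<sigma>s \<tau>)"
    using Cons.IH by blast
  with typeof_AppD obtain \<rho> where "typeof h = Some (Fun \<rho> (foldr Fun \<sigma>s \<tau>))" "typeof s = Some \<rho>"
    by blast
  with \<sigma>s(1) show ?case by (intro exI[of _ "\<rho> # \<sigma>s"]) simp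
qed

lemma foldr_Fun_inj: "foldr Fun \<sigma>s \<tau> = foldr Fun \<rho>s \<tau> \<Longrightarrow> length \<sigma>s = length \<rho>s \<Longrightarrow> \<sigma>s = \<rho>s"
  by (induction \<sigma>s \<rho>s rule: list_induct2') auto

lemma typeof_apps_args:
  assumes "typeof (apps h ss) = Some \<tau>" "typeof (apps h ts) = Some \<tau>" "length ss = length ts"
    and "i < length ss"
  obtains \<sigma> where "typeof (ss ! i) = Some \<sigma>" "typeof (ts ! i) = Some \<sigma>"
proof -
  obtain \<sigma>s \<rho>s where
    "map typeof ss = map Some \<sigma>s" "typeof h = Some (foldr Fun \<sigma>s \<tau>)"
    "map typeof ts = map Some \<rho>s" "typeof h = Some (foldr Fun \<rho>s \<tau>)"
    using typeof_appsD assms(1,2) by metis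
  moreover from this assms(3) have "\<sigma>s = \<rho>s"
    by (metis foldr_Fun_inj length_map option.inject)
  ultimately have "typeof (ss ! i) = Some (\<sigma>s ! i)" "typeof (ts ! i) = Some (\<sigma>s ! i)"
    using assms(3,4) by (metis length_map nth_map)+
  then show thesis by (rule that)
qed

lemma apps_inj: "length ss = length ts \<Longrightarrow> apps h ss = apps h' ts \<Longrightarrow> h = h' \<and> ss = ts"
  by (induction ss ts arbitrary: h h' rule: list_induct2) (auto simp: apps_def)

lemma finite_frees: "finite (frees t)"
  by (induction t) auto

lemma eval_in_domain:
  "assignment D ap I \<Longrightarrow> typeof t = Some \<sigma> \<Longrightarrow> eval D ap I t = Some v \<Longrightarrow> v \<in> D \<sigma>"
proof (induction t arbitrary: \<sigma> v)
  case (Nm x)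
  then show ?case by (auto simp: assignment_def)
next
  case (App s t)
  from typeof_AppD[OF App.prems(2)] obtain \<rho>
    where "typeof s = Some (Fun \<rho> \<sigma>)" "typeof t = Some \<rho>" by blast
  moreover from App.prems(3) obtain f a
    where "eval D ap I s = Some f" "eval D ap I t = Some a" "v = ap f a"
    by (simp split: option.splits)
  moreover have "frame D ap" using App.prems(1) by (simp add: assignment_def)
  ultimately show ?case using App.IH App.prems(1) unfolding frame_def by blast
next
  case (Lam x s)
  let ?P = "\<lambda>f. f \<in> D \<sigma> \<and> (\<forall>a\<in>D (ntype x). eval D ap (I(x := a)) s = Some (ap f a))"
  from Lam.prems(2,3) have "Ex ?P" and "v = Eps ?P"
    by (auto simp del: typeof.simps split: if_splits)
  then show ?case using someI_ex[of ?P] by blast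
qed

lemma eval_frees_cong: "\<forall>y\<in>frees t. I y = J y \<Longrightarrow> eval D ap I t = eval D ap J t"
proof (induction t arbitrary: I J)
  case (App s t)
  then have "eval D ap I s = eval D ap J s" "eval D ap I t = eval D ap J t" by auto
  then show ?case by (simp only: eval.simps)
next
  case (Lam x s)
  then have "\<And>a. eval D ap (I(x := a)) s = eval D ap (J(x := a)) s" by auto
  then show ?case by (simp only: eval.simps)
qed simp

lemma eval_upd_fresh: "x \<notin> frees t \<Longrightarrow> eval D ap (I(x := a)) t = eval D ap I t"
  by (rule eval_frees_cong) auto

text \<open>Totality of \<open>I\<close> on \<open>\<lambda>x. t\<close> is what makes \<open>I(x := a)\<close> total on \<open>t\<close>.\<close>

lemma is_interp_upd:
  assumes "is_interp D ap I" "a \<in> D (ntype x)"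
  shows "is_interp D ap (I(x := a))"
proof -
  have "eval D ap (I(x := a)) t \<noteq> None" if "wt t" for t
  proof -
    from that obtain \<tau> where "typeof (Lam x t) = Some (Fun (ntype x) \<tau>)" by (auto simp: wt_def)
    moreover from this have "eval D ap I (Lam x t) \<noteq> None"
      using assms(1) unfolding is_interp_def wt_def by blast
    ultimately have "\<exists>f\<in>D (Fun (ntype x) \<tau>). \<forall>a\<in>D (ntype x). eval D ap (I(x := a)) t = Some (ap f a)"
      by (simp del: typeof.simps split: if_splits)
    then show ?thesis using assms(2) by auto
  qed
  moreover have "assignment D ap (I(x := a))"
    using assms by (auto simp: is_interp_def assignment_def)
  ultimately show ?thesis by (simp add: is_interp_def)
qed

lemma logical_upd:
  assumes "logical D ap I" "is_var x" "a \<in> D (ntype x)"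
  shows "logical D ap (I(x := a))"
proof -
  have "x \<noteq> Neg" "\<And>\<sigma>. x \<noteq> Eq \<sigma>" using assms(2) by (auto simp: is_var_def)
  then show ?thesis using assms is_interp_upd[of D ap I a x] by (auto simp: logical_def)
qed

lemma logical_eval_defined:
  assumes "logical D ap I" "typeof s = Some \<sigma>"
  obtains v where "eval D ap I s = Some v" "v \<in> D \<sigma>"
proof -
  from assms(1) have "is_interp D ap I" by (simp add: logical_def)
  with assms(2) have "eval D ap I s \<noteq> None" by (simp add: is_interp_def wt_def)
  then obtain v where v: "eval D ap I s = Some v" by blast
  moreover from \<open>is_interp D ap I\<close> have "assignment D ap I" by (simp add: is_interp_def)
  ultimately show thesis using eval_in_domain[OF _ assms(2) v] that by simp
qed

lemma eval_formula:
  assumes "logical D ap I" "typeof s = Some tyo"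
  obtains b where "eval D ap I s = Some (B b)"
proof -
  obtain v where "eval D ap I s = Some v" "v \<in> D tyo"
    using logical_eval_defined[OF assms] .
  moreover from assms(1) have "D tyo = {B False, B True}" by (simp add: logical_def)
  ultimately show thesis using that by auto
qed

lemma eval_eq:
  assumes "logical D ap I" "typeof s = Some \<sigma>" "typeof t = Some \<sigma>"
  shows "eval D ap I (eq \<sigma> s t) = Some (B (eval D ap I s = eval D ap I t))"
proof -
  obtain a where "eval D ap I s = Some a" "a \<in> D \<sigma>" using logical_eval_defined[OF assms(1,2)] .
  moreover obtain b where "eval D ap I t = Some b" "b \<in> D \<sigma>" using logical_eval_defined[OF assms(1,3)] .
  ultimately show ?thesis using assms(1) by (simp add: eq_def logical_def)
qed

lemma eval_neg:
  assumes "logical D ap I" "typeof s = Some tyo"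
  shows "eval D ap I (neg s) = Some (B (eval D ap I s \<noteq> Some (B True)))"
proof -
  obtain b where "eval D ap I s = Some (B b)" using eval_formula[OF assms] .
  with assms(1) show ?thesis by (simp add: neg_def logical_def)
qed

lemma eval_neq:
  assumes "logical D ap I" "typeof s = Some \<sigma>" "typeof t = Some \<sigma>"
  shows "eval D ap I (neq \<sigma> s t) = Some (B (eval D ap I s \<noteq> eval D ap I t))"
  using assms by (simp add: neq_def eval_neg eval_eq typeof_eq)

lemma eval_apps_cong:
  "list_all2 (\<lambda>s t. eval D ap I s = eval D ap I t) ss ts \<Longrightarrow> eval D ap I h = eval D ap I h'
   \<Longrightarrow> eval D ap I (apps h ss) = eval D ap I (apps h' ts)"
proof (induction ss ts arbitrary: h h' rule: list_all2_induct)
  case (Cons s ss t ts)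
  have "eval D ap I (App h s) = eval D ap I (App h' t)"
    using Cons.hyps(1) Cons.prems by (simp only: eval.simps)
  from Cons.IH[OF this] show ?case by (simp add: apps_def)
qed (simp add: apps_def)

text \<open>Functional extensionality of frames, read through a fresh variable.\<close>

lemma eval_App_fresh_separates:
  assumes "logical D ap I" "typeof s = Some (Fun \<sigma> \<tau>)" "typeof t = Some (Fun \<sigma> \<tau>)"
    and "eval D ap I s \<noteq> eval D ap I t" and "ntype x = \<sigma>" "x \<notin> frees s" "x \<notin> frees t"
  obtains a where "a \<in> D \<sigma>"
    "eval D ap (I(x := a)) (App s (Nm x)) \<noteq> eval D ap (I(x := a)) (App t (Nm x))"
proof -
  obtain f where f: "eval D ap I s = Some f" "f \<in> D (Fun \<sigma> \<tau>)"
    using logical_eval_defined[OF assms(1,2)] .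
  moreover obtain g where g: "eval D ap I t = Some g" "g \<in> D (Fun \<sigma> \<tau>)"
    using logical_eval_defined[OF assms(1,3)] .
  moreover from f g assms(4) have "f \<noteq> g" by simp
  moreover have "frame D ap" using assms(1) by (simp add: logical_def is_interp_def assignment_def)
  ultimately obtain a where a: "a \<in> D \<sigma>" "ap f a \<noteq> ap g a"
    unfolding frame_def by blast
  have "eval D ap (I(x := a)) (App s (Nm x)) = Some (ap f a)"
    "eval D ap (I(x := a)) (App t (Nm x)) = Some (ap g a)"
    using f(1) g(1) assms(6,7) by (simp_all add: eval_upd_fresh)
  with a(2) have "eval D ap (I(x := a)) (App s (Nm x)) \<noteq> eval D ap (I(x := a)) (App t (Nm x))"
    by simp
  with a(1) show thesis by (rule that)
qed

context
  fixes nrm :: "tm \<Rightarrow> tm"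
  assumes nrm: "normalizer TYPE('u) nrm"
begin

lemma nrm_typeof: "typeof s = Some \<sigma> \<Longrightarrow> typeof (nrm s) = Some \<sigma>"
  using nrm by (simp add: normalizer_def)

lemma nrm_idem: "wt s \<Longrightarrow> nrm (nrm s) = nrm s"
  using nrm by (simp add: normalizer_def)

lemma nrm_apps: "typeof (apps (Nm x) ss) = Some (Base n) \<Longrightarrow> nrm (apps (Nm x) ss) = apps (Nm x) (map nrm ss)"
  using nrm by (simp add: normalizer_def)

lemma eval_nrm:
  "is_interp (D :: ty \<Rightarrow> 'u dval set) ap I \<Longrightarrow> wt s \<Longrightarrow> eval D ap I (nrm s) = eval D ap I s"
  using nrm by (simp add: normalizer_def)

lemma nrm_apps_fixed_iff:
  "typeof (apps (Nm x) ss) = Some (Base n) \<Longrightarrow> nrm (apps (Nm x) ss) = apps (Nm x) ss \<longleftrightarrow> map nrm ss = ss"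
  using apps_inj[of "map nrm ss" ss] by (auto simp: nrm_apps)

lemma nrm_neg_fixed_iff: "typeof s = Some tyo \<Longrightarrow> nrm (neg s) = neg s \<longleftrightarrow> nrm s = s"
  using nrm_apps_fixed_iff[of Neg "[s]" 0] by (simp add: neg_def apps_def)

lemma nrm_eq_fixed_iff:
  "typeof s = Some \<sigma> \<Longrightarrow> typeof t = Some \<sigma> \<Longrightarrow> nrm (eq \<sigma> s t) = eq \<sigma> s t \<longleftrightarrow> nrm s = s \<and> nrm t = t"
  using nrm_apps_fixed_iff[of "Eq \<sigma>" "[s, t]" 0] by (simp add: eq_def apps_def)

lemma nrm_neq_fixed_iff:
  "typeof s = Some \<sigma> \<Longrightarrow> typeof t = Some \<sigma> \<Longrightarrow> nrm (neq \<sigma> s t) = neq \<sigma> s t \<longleftrightarrow> nrm s = s \<and> nrm t = t"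
  by (simp add: neq_def nrm_neg_fixed_iff nrm_eq_fixed_iff typeof_eq)

lemma nrm_App_normal: "typeof (App s u) = Some \<tau> \<Longrightarrow> typeof (nrm (App s u)) = Some \<tau> \<and> nrm (nrm (App s u)) = nrm (App s u)"
  by (simp add: nrm_typeof nrm_idem wt_def)

end

subsection \<open>The class of finitely satisfiable, sufficiently pure branches\<close>

lemma satisfiable_subset: "satisfiable T S \<Longrightarrow> S' \<subseteq> S \<Longrightarrow> satisfiable T S'"
  unfolding satisfiable_def by blast

lemma sufficiently_pure_fresh_var:
  assumes "sufficiently_pure A"
  obtains x where "is_var x" "ntype x = \<sigma>" "\<forall>s\<in>A. x \<notin> frees s"
proof -
  from assms have "infinite {x. is_var x \<and> ntype x = \<sigma> \<and> (\<forall>s\<in>A. x \<notin> frees s)}"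
    by (simp add: sufficiently_pure_def)
  from infinite_imp_nonempty[OF this] show thesis using that by blast
qed

lemma sufficiently_pure_Un_finite:
  assumes "sufficiently_pure A" "finite N"
  shows "sufficiently_pure (A \<union> N)"
  unfolding sufficiently_pure_def
proof
  fix \<sigma>
  let ?fresh = "\<lambda>S. {x. is_var x \<and> ntype x = \<sigma> \<and> (\<forall>s\<in>S. x \<notin> frees s)}"
  have "infinite (?fresh A - \<Union>(frees ` N))"
    using assms by (simp add: sufficiently_pure_def finite_frees Diff_infinite_finite)
  moreover have "?fresh A - \<Union>(frees ` N) \<subseteq> ?fresh (A \<union> N)" by auto
  ultimately show "infinite (?fresh (A \<union> N))" by (rule infinite_super[rotated])
qed

lemma Gamma_comp_branch: "A \<in> Gamma_comp T nrm \<Longrightarrow> branch nrm A"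
  by (simp add: Gamma_comp_def)

lemma Gamma_comp_formula: "A \<in> Gamma_comp T nrm \<Longrightarrow> s \<in> A \<Longrightarrow> typeof s = Some tyo \<and> nrm s = s"
  by (simp add: Gamma_comp_def branch_def is_formula_def)

lemma Gamma_comp_Un:
  assumes "A \<in> Gamma_comp T nrm" "finite N" "branch nrm N"
    and "\<And>F. F \<subseteq> A \<Longrightarrow> finite F \<Longrightarrow> satisfiable T (F \<union> N)"
  shows "A \<union> N \<in> Gamma_comp T nrm"
proof -
  have "satisfiable T F" if "F \<subseteq> A \<union> N" "finite F" for F
  proof (rule satisfiable_subset)
    show "satisfiable T ((F \<inter> A) \<union> N)" using assms(4) that by simp
    show "F \<subseteq> (F \<inter> A) \<union> N" using that(1) by blast
  qed
  moreover have "branch nrm (A \<union> N)" using assms(1,3) by (auto simp: Gamma_comp_def branch_def)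
  moreover have "sufficiently_pure (A \<union> N)"
    using assms(1,2) by (simp add: Gamma_comp_def sufficiently_pure_Un_finite)
  ultimately show ?thesis by (simp add: Gamma_comp_def)
qed

text \<open>The compactness argument: if every \<open>A \<union> N\<close> with \<open>N \<in> K\<close> failed, each would contain an
  unsatisfiable \<open>F\<^sub>N \<union> N\<close> with finite \<open>F\<^sub>N \<subseteq> A\<close>, and a model of \<open>P \<union> \<Union>\<^sub>N F\<^sub>N\<close> refutes one of them.\<close>

lemma Gamma_comp_Un_some:
  fixes K :: "tm set set"
  assumes A: "A \<in> Gamma_comp TYPE('u) nrm" and "finite K" and K: "\<forall>N\<in>K. finite N \<and> branch nrm N"
    and P: "P \<subseteq> A" "finite P"
    and sound: "\<And>(D :: ty \<Rightarrow> 'u dval set) ap I. logical D ap I \<Longrightarrow> models D ap I P \<Longrightarrow> \<exists>N\<in>K. models D ap I N"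
  shows "\<exists>N\<in>K. A \<union> N \<in> Gamma_comp TYPE('u) nrm"
proof (rule ccontr)
  assume none: "\<not> ?thesis"
  have "\<forall>N\<in>K. \<exists>F. F \<subseteq> A \<and> finite F \<and> \<not> satisfiable TYPE('u) (F \<union> N)"
  proof
    fix N assume "N \<in> K"
    show "\<exists>F. F \<subseteq> A \<and> finite F \<and> \<not> satisfiable TYPE('u) (F \<union> N)"
    proof (rule ccontr)
      assume "\<nexists>F. F \<subseteq> A \<and> finite F \<and> \<not> satisfiable TYPE('u) (F \<union> N)"
      moreover have "finite N" "branch nrm N" using K \<open>N \<in> K\<close> by simp_all
      ultimately have "A \<union> N \<in> Gamma_comp TYPE('u) nrm" using Gamma_comp_Un[OF A] by blast
      with none \<open>N \<in> K\<close> show False by blast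
    qed
  qed
  then obtain F where F: "\<forall>N\<in>K. F N \<subseteq> A \<and> finite (F N) \<and> \<not> satisfiable TYPE('u) (F N \<union> N)"
    by (rule bchoice[THEN exE])
  have "P \<union> \<Union>(F ` K) \<subseteq> A" "finite (P \<union> \<Union>(F ` K))" using F P \<open>finite K\<close> by auto
  with A have "satisfiable TYPE('u) (P \<union> \<Union>(F ` K))" by (simp add: Gamma_comp_def)
  then obtain D :: "ty \<Rightarrow> 'u dval set" and ap I
    where I: "logical D ap I" "models D ap I (P \<union> \<Union>(F ` K))"
    unfolding satisfiable_def by blast
  from I(2) have "models D ap I P" by blast
  with sound[OF I(1)] obtain N where N: "N \<in> K" "models D ap I N" by blast
  with I(2) have "models D ap I (F N \<union> N)" by blast
  with I(1) have "satisfiable TYPE('u) (F N \<union> N)" unfolding satisfiable_def by blast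
  with F N(1) show False by blast
qed

lemma Gamma_comp_Un_one:
  assumes "A \<in> Gamma_comp TYPE('u) nrm" "finite N" "branch nrm N" "P \<subseteq> A" "finite P"
    and "\<And>(D :: ty \<Rightarrow> 'u dval set) ap I. logical D ap I \<Longrightarrow> models D ap I P \<Longrightarrow> models D ap I N"
  shows "A \<union> N \<in> Gamma_comp TYPE('u) nrm"
proof -
  have "\<exists>N'\<in>{N}. A \<union> N' \<in> Gamma_comp TYPE('u) nrm"
  proof (rule Gamma_comp_Un_some[OF assms(1) _ _ assms(4,5)])
    fix D :: "ty \<Rightarrow> 'u dval set" and ap I
    assume "logical D ap I" "models D ap I P"
    from assms(6)[OF this] show "\<exists>N'\<in>{N}. models D ap I N'" by simp
  qed (simp_all add: assms(2,3))
  then show ?thesis by simp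
qed

lemma Gamma_comp_Un_either:
  assumes "A \<in> Gamma_comp TYPE('u) nrm" "finite N\<^sub>1" "branch nrm N\<^sub>1" "finite N\<^sub>2" "branch nrm N\<^sub>2"
    and "P \<subseteq> A" "finite P"
    and "\<And>(D :: ty \<Rightarrow> 'u dval set) ap I. logical D ap I \<Longrightarrow> models D ap I P \<Longrightarrow>
      models D ap I N\<^sub>1 \<or> models D ap I N\<^sub>2"
  shows "A \<union> N\<^sub>1 \<in> Gamma_comp TYPE('u) nrm \<or> A \<union> N\<^sub>2 \<in> Gamma_comp TYPE('u) nrm"
proof -
  have "\<exists>N\<in>{N\<^sub>1, N\<^sub>2}. A \<union> N \<in> Gamma_comp TYPE('u) nrm"
  proof (rule Gamma_comp_Un_some[OF assms(1) _ _ assms(6,7)])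
    fix D :: "ty \<Rightarrow> 'u dval set" and ap I
    assume "logical D ap I" "models D ap I P"
    from assms(8)[OF this] show "\<exists>N\<in>{N\<^sub>1, N\<^sub>2}. models D ap I N" by simp
  qed (simp_all add: assms(2-5))
  then show ?thesis by simp
qed

subsection \<open>Soundness of the rules\<close>

context
  fixes nrm :: "tm \<Rightarrow> tm" and A :: "tm set"
  assumes nrm: "normalizer TYPE('u) nrm" and A: "A \<in> Gamma_comp TYPE('u) nrm"
begin

lemma Gamma_comp_negD:
  assumes "neg s \<in> A"
  shows "typeof s = Some tyo \<and> nrm s = s"
proof -
  from Gamma_comp_formula[OF A assms] have "typeof (neg s) = Some tyo" "nrm (neg s) = neg s" by simp_all
  moreover from this(1) have "typeof s = Some tyo" by (simp add: typeof_neg)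
  ultimately show ?thesis by (simp add: nrm_neg_fixed_iff[OF nrm])
qed

lemma Gamma_comp_eqD:
  assumes "eq \<sigma> s t \<in> A"
  shows "typeof s = Some \<sigma> \<and> typeof t = Some \<sigma> \<and> nrm s = s \<and> nrm t = t"
proof -
  from Gamma_comp_formula[OF A assms] have "typeof (eq \<sigma> s t) = Some tyo" "nrm (eq \<sigma> s t) = eq \<sigma> s t"
    by simp_all
  moreover from this(1) have "typeof s = Some \<sigma>" "typeof t = Some \<sigma>" by (simp_all add: typeof_eq)
  ultimately show ?thesis by (simp add: nrm_eq_fixed_iff[OF nrm])
qed

lemma Gamma_comp_neqD:
  assumes "neq \<sigma> s t \<in> A"
  shows "typeof s = Some \<sigma> \<and> typeof t = Some \<sigma> \<and> nrm s = s \<and> nrm t = t"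
proof -
  from Gamma_comp_formula[OF A assms] have "typeof (neq \<sigma> s t) = Some tyo" "nrm (neq \<sigma> s t) = neq \<sigma> s t"
    by simp_all
  moreover from this(1) have "typeof s = Some \<sigma>" "typeof t = Some \<sigma>" by (simp_all add: typeof_neq)
  ultimately show ?thesis by (simp add: nrm_neq_fixed_iff[OF nrm])
qed

lemma Gamma_comp_DN:
  assumes "neg (neg s) \<in> A"
  shows "A \<union> {s} \<in> Gamma_comp TYPE('u) nrm"
proof -
  from Gamma_comp_negD[OF assms] have "typeof (neg s) = Some tyo" "nrm (neg s) = neg s" by simp_all
  then have s: "typeof s = Some tyo" "nrm s = s" by (simp_all add: typeof_neg nrm_neg_fixed_iff[OF nrm])
  show ?thesis
  proof (rule Gamma_comp_Un_one[OF A, where P = "{neg (neg s)}"])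
    fix D :: "ty \<Rightarrow> 'u dval set" and ap I
    assume "logical D ap I" "models D ap I {neg (neg s)}"
    then show "models D ap I {s}" using s by (simp add: eval_neg typeof_neg)
  qed (use assms s in \<open>simp_all add: branch_def is_formula_def\<close>)
qed

lemma Gamma_comp_BQ:
  assumes "eq tyo s t \<in> A"
  shows "A \<union> {s, t} \<in> Gamma_comp TYPE('u) nrm \<or> A \<union> {neg s, neg t} \<in> Gamma_comp TYPE('u) nrm"
proof -
  from Gamma_comp_eqD[OF assms] have st: "typeof s = Some tyo" "typeof t = Some tyo" "nrm s = s" "nrm t = t"
    by simp_all
  show ?thesis
  proof (rule Gamma_comp_Un_either[OF A, where P = "{eq tyo s t}"])
    fix D :: "ty \<Rightarrow> 'u dval set" and ap I
    assume "logical D ap I" "models D ap I {eq tyo s t}"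
    then show "models D ap I {s, t} \<or> models D ap I {neg s, neg t}"
      using st by (simp add: eval_eq eval_neg)
  qed (use assms st in \<open>simp_all add: branch_def is_formula_def typeof_neg nrm_neg_fixed_iff[OF nrm]\<close>)
qed

lemma Gamma_comp_BE:
  assumes "neq tyo s t \<in> A"
  shows "A \<union> {s, neg t} \<in> Gamma_comp TYPE('u) nrm \<or> A \<union> {neg s, t} \<in> Gamma_comp TYPE('u) nrm"
proof -
  from Gamma_comp_neqD[OF assms] have st: "typeof s = Some tyo" "typeof t = Some tyo" "nrm s = s" "nrm t = t"
    by simp_all
  show ?thesis
  proof (rule Gamma_comp_Un_either[OF A, where P = "{neq tyo s t}"])
    fix D :: "ty \<Rightarrow> 'u dval set" and ap I
    assume I: "logical D ap I" "models D ap I {neq tyo s t}"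
    obtain b where "eval D ap I s = Some (B b)" using eval_formula[OF I(1) st(1)] .
    moreover obtain c where "eval D ap I t = Some (B c)" using eval_formula[OF I(1) st(2)] .
    ultimately show "models D ap I {s, neg t} \<or> models D ap I {neg s, t}"
      using I st by (auto simp: eval_neq eval_neg)
  qed (use assms st in \<open>simp_all add: branch_def is_formula_def typeof_neg nrm_neg_fixed_iff[OF nrm]\<close>)
qed

lemma Gamma_comp_FQ:
  assumes "eq (Fun \<sigma> \<tau>) s t \<in> A" "typeof u = Some \<sigma>"
  shows "A \<union> {eq \<tau> (nrm (App s u)) (nrm (App t u))} \<in> Gamma_comp TYPE('u) nrm"
proof -
  from Gamma_comp_eqD[OF assms(1)] have st: "typeof s = Some (Fun \<sigma> \<tau>)" "typeof t = Some (Fun \<sigma> \<tau>)"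
    by simp_all
  with assms(2) have ty: "typeof (App s u) = Some \<tau>" "typeof (App t u) = Some \<tau>" by simp_all
  then have n: "typeof (nrm (App s u)) = Some \<tau>" "nrm (nrm (App s u)) = nrm (App s u)"
    "typeof (nrm (App t u)) = Some \<tau>" "nrm (nrm (App t u)) = nrm (App t u)"
    using nrm_App_normal[OF nrm] by blast+
  show ?thesis
  proof (rule Gamma_comp_Un_one[OF A, where P = "{eq (Fun \<sigma> \<tau>) s t}"])
    fix D :: "ty \<Rightarrow> 'u dval set" and ap I
    assume I: "logical D ap I" "models D ap I {eq (Fun \<sigma> \<tau>) s t}"
    then have "eval D ap I s = eval D ap I t" using st by (simp add: eval_eq)
    moreover from I(1) have "is_interp D ap I" by (simp add: logical_def)
    ultimately have "eval D ap I (nrm (App s u)) = eval D ap I (nrm (App t u))"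
      using ty by (simp add: eval_nrm[OF nrm] wt_def)
    with I(1) n show "models D ap I {eq \<tau> (nrm (App s u)) (nrm (App t u))}" by (simp add: eval_eq)
  qed (use assms n in \<open>simp_all add: branch_def is_formula_def typeof_eq nrm_eq_fixed_iff[OF nrm]\<close>)
qed

text \<open>A model of the old formulas is turned into one of the new formula by updating a fresh
  variable \<open>x\<close> at a point where the denotations of \<open>s\<close> and \<open>t\<close> differ.\<close>

lemma Gamma_comp_FE:
  assumes "neq (Fun \<sigma> \<tau>) s t \<in> A"
  shows "\<exists>x. is_var x \<and> ntype x = \<sigma> \<and>
    A \<union> {neq \<tau> (nrm (App s (Nm x))) (nrm (App t (Nm x)))} \<in> Gamma_comp TYPE('u) nrm"
proof -
  from Gamma_comp_neqD[OF assms] have st: "typeof s = Some (Fun \<sigma> \<tau>)" "typeof t = Some (Fun \<sigma> \<tau>)"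
    by simp_all
  from A have "sufficiently_pure A" by (simp add: Gamma_comp_def)
  then obtain x where x: "is_var x" "ntype x = \<sigma>" "\<forall>p\<in>A. x \<notin> frees p"
    by (rule sufficiently_pure_fresh_var)
  with assms have fresh: "x \<notin> frees s" "x \<notin> frees t" by (auto simp: neq_def neg_def eq_def)
  from st x(2) have ty: "typeof (App s (Nm x)) = Some \<tau>" "typeof (App t (Nm x)) = Some \<tau>" by simp_all
  then have n: "typeof (nrm (App s (Nm x))) = Some \<tau>" "nrm (nrm (App s (Nm x))) = nrm (App s (Nm x))"
    "typeof (nrm (App t (Nm x))) = Some \<tau>" "nrm (nrm (App t (Nm x))) = nrm (App t (Nm x))"
    using nrm_App_normal[OF nrm] by blast+
  let ?n = "neq \<tau> (nrm (App s (Nm x))) (nrm (App t (Nm x)))"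
  have "A \<union> {?n} \<in> Gamma_comp TYPE('u) nrm"
  proof (rule Gamma_comp_Un[OF A])
    show "branch nrm {?n}" using n by (simp add: branch_def is_formula_def typeof_neq nrm_neq_fixed_iff[OF nrm])
  next
    fix F assume F: "F \<subseteq> A" "finite F"
    with A assms have "satisfiable TYPE('u) (insert (neq (Fun \<sigma> \<tau>) s t) F)" by (simp add: Gamma_comp_def)
    then obtain D :: "ty \<Rightarrow> 'u dval set" and ap I
      where I: "logical D ap I" "models D ap I (insert (neq (Fun \<sigma> \<tau>) s t) F)"
      unfolding satisfiable_def by blast
    then have "eval D ap I s \<noteq> eval D ap I t" using st by (simp add: eval_neq)
    then obtain a where a: "a \<in> D \<sigma>"
      "eval D ap (I(x := a)) (App s (Nm x)) \<noteq> eval D ap (I(x := a)) (App t (Nm x))"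
      using eval_App_fresh_separates[OF I(1) st _ x(2) fresh] by blast
    have J: "logical D ap (I(x := a))" using logical_upd[OF I(1) x(1)] a(1) x(2) by simp
    then have "is_interp D ap (I(x := a))" by (simp add: logical_def)
    with a(2) ty have "models D ap (I(x := a)) {?n}"
      using J n by (simp add: eval_neq eval_nrm[OF nrm] wt_def)
    moreover have "models D ap (I(x := a)) F"
      using I(2) F(1) x(3) by (auto simp: eval_upd_fresh)
    ultimately show "satisfiable TYPE('u) (F \<union> {?n})" unfolding satisfiable_def using J by blast
  qed simp
  with x(1,2) show ?thesis by blast
qed

text \<open>Unlike the rule Con, this needs no restriction to sorts.\<close>

lemma Gamma_comp_Con:
  assumes "eq \<alpha> s t \<in> A" "neq \<alpha> u v \<in> A"
  shows "A \<union> {neq \<alpha> s u, neq \<alpha> t u} \<in> Gamma_comp TYPE('u) nrm \<or>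
    A \<union> {neq \<alpha> s v, neq \<alpha> t v} \<in> Gamma_comp TYPE('u) nrm"
proof -
  from Gamma_comp_eqD[OF assms(1)] Gamma_comp_neqD[OF assms(2)]
  have ty: "typeof s = Some \<alpha>" "typeof t = Some \<alpha>" "typeof u = Some \<alpha>" "typeof v = Some \<alpha>"
    and nf: "nrm s = s" "nrm t = t" "nrm u = u" "nrm v = v" by simp_all
  show ?thesis
  proof (rule Gamma_comp_Un_either[OF A, where P = "{eq \<alpha> s t, neq \<alpha> u v}"])
    fix D :: "ty \<Rightarrow> 'u dval set" and ap I
    assume I: "logical D ap I" "models D ap I {eq \<alpha> s t, neq \<alpha> u v}"
    then have "eval D ap I s = eval D ap I t" "eval D ap I u \<noteq> eval D ap I v"
      using ty by (simp_all add: eval_eq eval_neq)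
    with I(1) ty show "models D ap I {neq \<alpha> s u, neq \<alpha> t u} \<or> models D ap I {neq \<alpha> s v, neq \<alpha> t v}"
      by (auto simp: eval_neq)
  qed (use assms ty nf in \<open>simp_all add: branch_def is_formula_def typeof_neq nrm_neq_fixed_iff[OF nrm]\<close>)
qed

text \<open>The common core of Mat and Dec: a model separating \<open>x s\<^sub>1 \<dots> s\<^sub>n\<close> from \<open>x t\<^sub>1 \<dots> t\<^sub>n\<close>
  separates some pair of arguments. Neither rule needs \<open>x\<close> to be a variable, nor Dec the base
  type to be a sort.\<close>

lemma Gamma_comp_decompose:
  assumes len: "length ss = length ts"
    and ty: "typeof (apps (Nm x) ss) = Some (Base n)" "typeof (apps (Nm x) ts) = Some (Base n)"
    and nf: "nrm (apps (Nm x) ss) = apps (Nm x) ss" "nrm (apps (Nm x) ts) = apps (Nm x) ts"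
    and P: "P \<subseteq> A" "finite P"
    and sep: "\<And>(D :: ty \<Rightarrow> 'u dval set) ap I. logical D ap I \<Longrightarrow> models D ap I P \<Longrightarrow>
      eval D ap I (apps (Nm x) ss) \<noteq> eval D ap I (apps (Nm x) ts)"
  shows "length ss \<ge> 1 \<and> (\<exists>i<length ss. A \<union> {neq (tyof (ss ! i)) (ss ! i) (ts ! i)} \<in> Gamma_comp TYPE('u) nrm)"
proof -
  let ?N = "\<lambda>i. {neq (tyof (ss ! i)) (ss ! i) (ts ! i)}"
  have arg: "\<exists>\<sigma>. tyof (ss ! i) = \<sigma> \<and> typeof (ss ! i) = Some \<sigma> \<and> typeof (ts ! i) = Some \<sigma> \<and>
      nrm (ss ! i) = ss ! i \<and> nrm (ts ! i) = ts ! i" if i: "i < length ss" for i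
  proof -
    obtain \<sigma> where \<sigma>: "typeof (ss ! i) = Some \<sigma>" "typeof (ts ! i) = Some \<sigma>"
      using typeof_apps_args[OF ty len i] .
    have "map nrm ss = ss" "map nrm ts = ts" using nf ty by (simp_all add: nrm_apps_fixed_iff[OF nrm])
    then have "nrm (ss ! i) = ss ! i" "nrm (ts ! i) = ts ! i" using i len by (metis nth_map)+
    with \<sigma> show ?thesis by (simp add: tyof_def)
  qed
  have "\<exists>N\<in>?N ` {..<length ss}. A \<union> N \<in> Gamma_comp TYPE('u) nrm"
  proof (rule Gamma_comp_Un_some[OF A _ _ P])
    show "\<forall>N\<in>?N ` {..<length ss}. finite N \<and> branch nrm N"
      using arg by (force simp: branch_def is_formula_def typeof_neq nrm_neq_fixed_iff[OF nrm])
  next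
    fix D :: "ty \<Rightarrow> 'u dval set" and ap I
    assume I: "logical D ap I" "models D ap I P"
    have "\<not> list_all2 (\<lambda>s t. eval D ap I s = eval D ap I t) ss ts"
    proof
      assume "list_all2 (\<lambda>s t. eval D ap I s = eval D ap I t) ss ts"
      from eval_apps_cong[OF this refl] sep[OF I] show False by simp
    qed
    then obtain i where i: "i < length ss" "eval D ap I (ss ! i) \<noteq> eval D ap I (ts ! i)"
      using len by (auto simp: list_all2_conv_all_nth)
    with arg have "models D ap I (?N i)" using I(1) by (auto simp: eval_neq)
    with i(1) show "\<exists>N\<in>?N ` {..<length ss}. models D ap I N" by blast
  qed simp
  then obtain i where "i < length ss" "A \<union> ?N i \<in> Gamma_comp TYPE('u) nrm" by blast
  then show ?thesis by auto
qed

lemma Gamma_comp_Mat: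
  assumes "length ss = length ts" "apps (Nm x) ss \<in> A" "neg (apps (Nm x) ts) \<in> A"
  shows "length ss \<ge> 1 \<and> (\<exists>i<length ss. A \<union> {neq (tyof (ss ! i)) (ss ! i) (ts ! i)} \<in> Gamma_comp TYPE('u) nrm)"
proof -
  from Gamma_comp_formula[OF A assms(2)]
  have ss: "typeof (apps (Nm x) ss) = Some tyo" "nrm (apps (Nm x) ss) = apps (Nm x) ss" by simp_all
  from Gamma_comp_negD[OF assms(3)]
  have ts: "typeof (apps (Nm x) ts) = Some tyo" "nrm (apps (Nm x) ts) = apps (Nm x) ts" by simp_all
  show ?thesis
  proof (rule Gamma_comp_decompose[OF assms(1) ss(1) ts(1) ss(2) ts(2),
        where P = "{apps (Nm x) ss, neg (apps (Nm x) ts)}"])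
    fix D :: "ty \<Rightarrow> 'u dval set" and ap I
    assume "logical D ap I" "models D ap I {apps (Nm x) ss, neg (apps (Nm x) ts)}"
    then show "eval D ap I (apps (Nm x) ss) \<noteq> eval D ap I (apps (Nm x) ts)"
      using ts(1) by (auto simp: eval_neg)
  qed (use assms in simp_all)
qed

lemma Gamma_comp_Dec:
  assumes "length ss = length ts" "neq (Base n) (apps (Nm x) ss) (apps (Nm x) ts) \<in> A"
  shows "length ss \<ge> 1 \<and> (\<exists>i<length ss. A \<union> {neq (tyof (ss ! i)) (ss ! i) (ts ! i)} \<in> Gamma_comp TYPE('u) nrm)"
proof -
  from Gamma_comp_neqD[OF assms(2)]
  have st: "typeof (apps (Nm x) ss) = Some (Base n)" "typeof (apps (Nm x) ts) = Some (Base n)"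
    "nrm (apps (Nm x) ss) = apps (Nm x) ss" "nrm (apps (Nm x) ts) = apps (Nm x) ts" by simp_all
  show ?thesis
  proof (rule Gamma_comp_decompose[OF assms(1) st,
        where P = "{neq (Base n) (apps (Nm x) ss) (apps (Nm x) ts)}"])
    fix D :: "ty \<Rightarrow> 'u dval set" and ap I
    assume "logical D ap I" "models D ap I {neq (Base n) (apps (Nm x) ss) (apps (Nm x) ts)}"
    then show "eval D ap I (apps (Nm x) ss) \<noteq> eval D ap I (apps (Nm x) ts)"
      using st by (simp add: eval_neq)
  qed (use assms in simp_all)
qed

lemma Gamma_comp_complete:
  assumes "typeof s = Some tyo" "nrm s = s"
  shows "A \<union> {s} \<in> Gamma_comp TYPE('u) nrm \<or> A \<union> {neg s} \<in> Gamma_comp TYPE('u) nrm"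
proof (rule Gamma_comp_Un_either[OF A, where P = "{}"])
  fix D :: "ty \<Rightarrow> 'u dval set" and ap I
  assume "logical D ap I"
  then show "models D ap I {s} \<or> models D ap I {neg s}" using assms by (simp add: eval_neg)
qed (use assms in \<open>simp_all add: branch_def is_formula_def typeof_neg nrm_neg_fixed_iff[OF nrm]\<close>)

end

theorem lemma10p2:
  fixes nrm :: "tm \<Rightarrow> tm"
  assumes "normalizer TYPE('u) nrm"
  shows "acc nrm (Gamma_comp TYPE('u) nrm) \<and> complete_class nrm (Gamma_comp TYPE('u) nrm)"
proof
  show "complete_class nrm (Gamma_comp TYPE('u) nrm)"
    using Gamma_comp_complete[OF assms] by (simp add: complete_class_def is_formula_def)
  show "acc nrm (Gamma_comp TYPE('u) nrm)"
    unfolding acc_def is_sort_def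
    by (intro ballI conjI allI impI; (elim conjE exE)?; hypsubst?;
        rule Gamma_comp_branch Gamma_comp_DN[OF assms] Gamma_comp_BQ[OF assms]
          Gamma_comp_BE[OF assms] Gamma_comp_FQ[OF assms] Gamma_comp_FE[OF assms]
          Gamma_comp_Mat[OF assms, THEN conjunct1] Gamma_comp_Mat[OF assms, THEN conjunct2]
          Gamma_comp_Dec[OF assms, THEN conjunct1] Gamma_comp_Dec[OF assms, THEN conjunct2]
          Gamma_comp_Con[OF assms];
        assumption)
qed

end
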